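(* Assume Assumption (S) and the upwind condition $A_{i,0}=0$ for all $i$. Let $\mathbb D^*$ be defined by $(\mathbb D^*v,\omega)_*=\tau\mathcal H^*(v,\omega)$ for all $\omega\in\mathbb V^k$, and let $R_s^*(v)=\sum_{\kappa=0}^s\alpha_\kappa(\mathbb D^* )^\kappa v$ with $\alpha_\kappa$ the coefficients of the polynomial $P_s(z)=\sum_{\kappa=0}^s\alpha_\kappa z^\kappa$ defined by $P_0(z)=1$, $P_{\ell+1}(z)=\sum_{0\le\kappa\le\ell}(c_{\ell\kappa}+d_{\ell\kappa}z)P_\kappa(z)$. Then there exist constants $\{b_\kappa\}$ and $\{b_{\kappa,\kappa_0}\}$ with $b_{\kappa,\kappa_0}=b_{\kappa_0,\kappa}$ such that for every $v\in\mathbb V^k$, $$\|R_s^*(v)\|_*^2=\|v\|_*^2+\sum_{\kappa=1}^sb_\kappa\|(\mathbb D^* )^\kappa v\|_*^2-\tau\sum_{0\le\kappa,\kappa_0<s}b_{\kappa,\kappa_0}\langle[\![(\mathbb D^* )^\kappa v]\!],[\![(\mathbb D^* )^{\kappa_0}v]\!]\rangle.$$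
   Context: Let $\Omega=[a,b]$ be partitioned into finitely many cells $I_i=[x_{i-\frac12},x_{i+\frac12}]$ with sizes $h_i$; indices periodic. $(\cdot,\cdot)$: $L^2(\Omega)$ inner product; $(\cdot,\cdot)_{I_i}$: $L^2(I_i)$ inner product. $\mathbb V^k=\{v\in L^2(\Omega): v|_{I_i}\in\mathbb P^k(I_i)\ \forall i\}$. Each $I_i$ has subdivision points $x_{i-\frac12}=x_{i,0}<x_{i,1}<\dots<x_{i,k}<x_{i,k+1}=x_{i+\frac12}$, control volumes $I_{i,j}=[x_{i,j},x_{i,j+1}]$; $\mathbb V^{k,*}$ = functions constant on each $I_{i,j}$. Quadrature on $I_i$: $Q_i^k(v)=\sum_{j=0}^{k+1}A_{i,j}v(x_{i,j})$ (applied to restrictions to $I_i$), error $R_i^k(v)=\int_{I_i}v\,dx-Q_i^k(v)$, exact on $\mathbb P^{k-1}(I_i)$. $M^*:\mathbb V^k\to\mathbb V^{k,*}$: for $v=\omega|_{I_i}$, $(M^*\omega)|_{I_{i,0}}=v(x_{i-\frac12})+A_{i,0}v'(x_{i-\frac12})$, $(M^*\omega)|_{I_{i,j}}-(M^*\omega)|_{I_{i,j-1}}=A_{i,j}v'(x_{i,j})$, $j=1,\dots,k$. $L_{i,\ell}$: shifted Legendre polynomial of degree $\ell$ on $I_i$, $L_{i,\ell}(x_{i+\frac12})=1$, $(L_{i,\ell},L_{i,m})_{I_i}=\delta_{\ell m}h_i/(2\ell+1)$. Assumption (S): $k\ge1$ and for every $i$, $R_i^k$ vanishes on $\mathbb P^{2k-1}(I_i)$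 and $\frac{h_i}{2k-1}-Q_i^k(L_{i,k+1}L_{i,k-1})>0$; then $(v,\omega)_*:=(v,M^*\omega)$ is an inner product on $\mathbb V^k$, $\|v\|_*=\sqrt{(v,v)_*}$. Jumps $[\![v]\!]_{i+\frac12}=v(x_{i+\frac12}^+)-v(x_{i+\frac12}^-)$, $\langle[\![v]\!],[\![\omega]\!]\rangle=\sum_i[\![v]\!]_{i+\frac12}[\![\omega]\!]_{i+\frac12}$. With $A_{i,0}=0$, for $v,\omega\in\mathbb V^k$: $\mathcal H^*(v,\omega)=\beta\big(\sum_iQ_i^k(v\omega_x)+\sum_iv(x_{i+\frac12}^-)[\![\omega]\!]_{i+\frac12}\big)$, $\beta>0$. $c_{\ell\kappa},d_{\ell\kappa}$ ($0\le\kappa\le\ell\le s-1$, $\sum_\kappa c_{\ell\kappa}=1$) are the coefficients of an explicit $s$-stage Runge–Kutta method, $\tau>0$ the time step. *)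

theory Defs
  imports "HOL-Analysis.Analysis" "HOL-Computational_Algebra.Polynomial"
begin

(* Mesh: N cells I_i = [xh i, xh (Suc i)], i < N (indices mod N for periodicity).
   Subdivision points xs i j, j = 0..k+1, with xs i 0 = xh i, xs i (k+1) = xh (Suc i).
   An element of V^k is represented as v :: nat => real poly, v i = v restricted to I_i. *)

definition inV :: "nat \<Rightarrow> nat \<Rightarrow> (nat \<Rightarrow> real poly) \<Rightarrow> bool" where
  "inV k N v \<longleftrightarrow> (\<forall>i<N. degree (v i) \<le> k)"

definition quad :: "nat \<Rightarrow> (nat \<Rightarrow> nat \<Rightarrow> real) \<Rightarrow> (nat \<Rightarrow> nat \<Rightarrow> real) \<Rightarrow> nat
                   \<Rightarrow> (real \<Rightarrow> real) \<Rightarrow> real" where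
  "quad k A xs i f = (\<Sum>j\<le>Suc k. A i j * f (xs i j))"

(* value of M^* w on the control volume I_{i,j}, j = 0..k *)
definition mstar :: "nat \<Rightarrow> (nat \<Rightarrow> nat \<Rightarrow> real) \<Rightarrow> (nat \<Rightarrow> nat \<Rightarrow> real) \<Rightarrow> (nat \<Rightarrow> real)
                    \<Rightarrow> (nat \<Rightarrow> real poly) \<Rightarrow> nat \<Rightarrow> nat \<Rightarrow> real" where
  "mstar k A xs xh w i j =
     poly (w i) (xh i) + (\<Sum>l\<le>j. A i l * poly (pderiv (w i)) (xs i l))"

(* (v, w)_* = (v, M^* w) *)
definition ip_star :: "nat \<Rightarrow> nat \<Rightarrow> (nat \<Rightarrow> nat \<Rightarrow> real) \<Rightarrow> (nat \<Rightarrow> nat \<Rightarrow> real) \<Rightarrow> (nat \<Rightarrow> real)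
                      \<Rightarrow> (nat \<Rightarrow> real poly) \<Rightarrow> (nat \<Rightarrow> real poly) \<Rightarrow> real" where
  "ip_star N k A xs xh v w =
     (\<Sum>i<N. \<Sum>j\<le>k. mstar k A xs xh w i j * integral {xs i j..xs i (Suc j)} (\<lambda>x. poly (v i) x))"

definition jump :: "nat \<Rightarrow> (nat \<Rightarrow> real) \<Rightarrow> (nat \<Rightarrow> real poly) \<Rightarrow> nat \<Rightarrow> real" where
  "jump N xh v i = poly (v (Suc i mod N)) (xh (Suc i mod N)) - poly (v i) (xh (Suc i))"

definition jump_ip :: "nat \<Rightarrow> (nat \<Rightarrow> real) \<Rightarrow> (nat \<Rightarrow> real poly) \<Rightarrow> (nat \<Rightarrow> real poly) \<Rightarrow> real" where
  "jump_ip N xh v w = (\<Sum>i<N. jump N xh v i * jump N xh w i)"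

(* H^*(v,w) with A_{i,0} = 0 *)
definition Hstar :: "nat \<Rightarrow> nat \<Rightarrow> (nat \<Rightarrow> nat \<Rightarrow> real) \<Rightarrow> (nat \<Rightarrow> nat \<Rightarrow> real) \<Rightarrow> (nat \<Rightarrow> real)
                    \<Rightarrow> real \<Rightarrow> (nat \<Rightarrow> real poly) \<Rightarrow> (nat \<Rightarrow> real poly) \<Rightarrow> real" where
  "Hstar N k A xs xh \<beta> v w =
     \<beta> * ((\<Sum>i<N. quad k A xs i (\<lambda>x. poly (v i) x * poly (pderiv (w i)) x))
          + (\<Sum>i<N. poly (v i) (xh (Suc i)) * jump N xh w i))"

fun legendre :: "nat \<Rightarrow> real poly" where
  "legendre 0 = 1"
| "legendre (Suc 0) = [:0, 1:]"
| "legendre (Suc (Suc n)) =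
     smult (1 / (real n + 2))
       (smult (2 * real n + 3) ([:0, 1:] * legendre (Suc n)) - smult (real n + 1) (legendre n))"

definition shifted_legendre :: "real \<Rightarrow> real \<Rightarrow> nat \<Rightarrow> real \<Rightarrow> real" where
  "shifted_legendre xl xr l x = poly (legendre l) ((2 * x - xl - xr) / (xr - xl))"

primrec rk_polys :: "(nat \<Rightarrow> nat \<Rightarrow> real) \<Rightarrow> (nat \<Rightarrow> nat \<Rightarrow> real) \<Rightarrow> nat \<Rightarrow> real poly list" where
  "rk_polys c d 0 = [1]"
| "rk_polys c d (Suc l) = rk_polys c d l @
     [\<Sum>\<kappa>\<le>l. [:c l \<kappa>, d l \<kappa>:] * (rk_polys c d l ! \<kappa>)]"

definition rk_poly :: "(nat \<Rightarrow> nat \<Rightarrow> real) \<Rightarrow> (nat \<Rightarrow> nat \<Rightarrow> real) \<Rightarrow> nat \<Rightarrow> real poly" where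
  "rk_poly c d n = rk_polys c d n ! n"

end

theory Submission
  imports Defs
begin

(* The stage operator is skew-adjoint up to jumps:
   (D v, w)_* + (v, D w)_* = - tau beta <[v],[w]>.
   This rests on the symmetry of (.,.)_*, which holds cell by cell because the
   quadrature is exact on P^{2k-1} (the degree-2k parts of the two orders cancel),
   and on a periodic summation by parts in H^*.  Hence the Gram matrix
   B p q = (D^p v, D^q v)_* satisfies B (p+1) q + B p (q+1) = - tau beta g p q with
   g p q = <[D^p v],[D^q v]>.  Moving powers of D from one side to the other reduces
   every B p q to a diagonal entry, or to B m (m+1) = - tau beta g m m / 2, plus jump
   terms, with coefficients independent of v.  Expanding
   ||R v||_*^2 = sum alpha_p alpha_q B p q and using alpha_0 = P_s(0) = 1 gives the
   identity. *)

section \<open>Antiderivatives of polynomials\<close>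

definition poly_antideriv :: "'a::field_char_0 poly \<Rightarrow> 'a poly" where
  "poly_antideriv p = (\<Sum>n\<le>degree p. monom (coeff p n / of_nat (Suc n)) (Suc n))"

lemma pderiv_poly_antideriv [simp]: "pderiv (poly_antideriv p) = p"
proof -
  have "pderiv (poly_antideriv p) = (\<Sum>n\<le>degree p. monom (coeff p n) n)"
    unfolding poly_antideriv_def
    by (simp add: higher_pderiv_sum[where n = 1, simplified] pderiv_monom del: of_nat_Suc)
  also have "\<dots> = p" by (rule poly_as_sum_of_monoms)
  finally show ?thesis .
qed

lemma coeff_poly_antideriv_Suc: "coeff (poly_antideriv p) (Suc m) = coeff p m / of_nat (Suc m)"
proof -
  have "coeff (poly_antideriv p) (Suc m)
      = (\<Sum>n\<le>degree p. if n = m then coeff p n / of_nat (Suc n) else 0)"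
    unfolding poly_antideriv_def coeff_sum by (intro sum.cong) (auto simp: coeff_monom)
  also have "\<dots> = coeff p m / of_nat (Suc m)"
    by (cases "m \<le> degree p") (auto simp: coeff_eq_0)
  finally show ?thesis .
qed

lemma degree_poly_antideriv: "degree (poly_antideriv p) \<le> Suc (degree p)"
  unfolding poly_antideriv_def
  by (rule degree_sum_le) (auto intro: order.trans[OF degree_monom_le])

lemma integral_poly_pderiv:
  fixes p :: "real poly"
  assumes "a \<le> b"
  shows "integral {a..b} (poly (pderiv p)) = poly p b - poly p a"
proof (rule integral_unique, rule fundamental_theorem_of_calculus[OF assms])
  fix x
  have "(poly p has_real_derivative poly (pderiv p) x) (at x within {a..b})"
    by (rule DERIV_subset[OF poly_DERIV]) simp
  then show "(poly p has_vector_derivative poly (pderiv p) x) (at x within {a..b})"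
    by (simp add: has_real_derivative_iff_has_vector_derivative)
qed

definition tail_antideriv :: "real \<Rightarrow> real poly \<Rightarrow> real poly" where
  "tail_antideriv b p = [:poly (poly_antideriv p) b:] - poly_antideriv p"

lemma pderiv_tail_antideriv [simp]: "pderiv (tail_antideriv b p) = - p"
  by (simp add: tail_antideriv_def pderiv_diff)

lemma poly_tail_antideriv_right [simp]: "poly (tail_antideriv b p) b = 0"
  by (simp add: tail_antideriv_def)

lemma integral_poly_tail_antideriv:
  "a \<le> c \<Longrightarrow> integral {a..c} (poly p) = poly (tail_antideriv b p) a - poly (tail_antideriv b p) c"
  using integral_poly_pderiv[of a c "poly_antideriv p"] by (simp add: tail_antideriv_def)

lemma coeff_tail_antideriv_Suc: "coeff (tail_antideriv b p) (Suc m) = - coeff p m / real (Suc m)"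
  by (simp add: tail_antideriv_def coeff_poly_antideriv_Suc del: of_nat_Suc)

lemma degree_tail_antideriv: "degree (tail_antideriv b p) \<le> Suc (degree p)"
  unfolding tail_antideriv_def
  by (rule degree_diff_le) (auto intro: degree_poly_antideriv)

lemma coeff_mult_degree_le:
  fixes p q :: "'a::idom poly"
  assumes "degree p \<le> m" "degree q \<le> n"
  shows "coeff (p * q) (m + n) = coeff p m * coeff q n"
proof (cases "degree p = m \<and> degree q = n")
  case True
  then show ?thesis using coeff_mult_degree_sum[of p q] by simp
next
  case False
  then have "coeff p m = 0 \<or> coeff q n = 0" using assms by (auto intro!: coeff_eq_0)
  moreover have "degree (p * q) < m + n"
    using False assms degree_mult_le[of p q] by linarith
  ultimately show ?thesis by (auto simp: coeff_eq_0)
qed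

lemma degree_tail_antideriv_commutator:
  fixes p q :: "real poly"
  assumes "k \<ge> 1" "degree p \<le> k" "degree q \<le> k"
  shows "degree (pderiv q * tail_antideriv b p - pderiv p * tail_antideriv b q) \<le> 2 * k - 1"
proof -
  let ?X = "pderiv q * tail_antideriv b p - pderiv p * tail_antideriv b q"
  have deg_pderiv: "degree (pderiv p) \<le> k - 1" "degree (pderiv q) \<le> k - 1"
    using assms by (auto simp: degree_pderiv)
  have deg_tail: "degree (tail_antideriv b p) \<le> Suc k" "degree (tail_antideriv b q) \<le> Suc k"
    using assms degree_tail_antideriv[of b p] degree_tail_antideriv[of b q] by auto
  have two_k: "2 * k = (k - 1) + Suc k" using assms(1) by simp
  have deg_X: "degree ?X \<le> 2 * k"
    unfolding two_k
    by (intro degree_diff_le order.trans[OF degree_mult_le] add_mono deg_pderiv deg_tail)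
  have top_X: "coeff ?X (2 * k) = 0"
    \<comment> \<open>both products have coefficient \<open>- k / (k + 1) * coeff p k * coeff q k\<close> there\<close>
    unfolding coeff_diff two_k
    using assms(1) coeff_mult_degree_le[OF deg_pderiv(2) deg_tail(1)]
      coeff_mult_degree_le[OF deg_pderiv(1) deg_tail(2)]
    by (simp add: coeff_pderiv coeff_tail_antideriv_Suc)
  show ?thesis
  proof (rule degree_le, intro allI impI)
    fix i assume "2 * k - 1 < i"
    then consider "i = 2 * k" | "2 * k < i" by linarith
    then show "coeff ?X i = 0"
      by cases (use top_X deg_X coeff_eq_0[of ?X i] in auto)
  qed
qed

section \<open>The quadrature inner product on one cell\<close>

lemma sum_prefix_sums_mult_diff:
  fixes c :: "'a::comm_ring"
  shows "(\<Sum>j\<le>n. (c + (\<Sum>l\<le>j. a l)) * (f j - f (Suc j)))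
       = c * (f 0 - f (Suc n)) + (\<Sum>l\<le>n. a l * (f l - f (Suc n)))"
  by (induction n) (simp_all add: algebra_simps sum.distrib sum_distrib_left sum_subtractf)

(* (p, M^* q) restricted to one cell, with subdivision points x 0, ..., x (k+1)
   and quadrature weights w. *)
definition cell_form ::
    "nat \<Rightarrow> (nat \<Rightarrow> real) \<Rightarrow> (nat \<Rightarrow> real) \<Rightarrow> real poly \<Rightarrow> real poly \<Rightarrow> real" where
  "cell_form k x w p q =
     (\<Sum>j\<le>k. (poly q (x 0) + (\<Sum>l\<le>j. w l * poly (pderiv q) (x l)))
             * integral {x j..x (Suc j)} (poly p))"

lemma cell_form_tail_antideriv:
  fixes p q :: "real poly"
  assumes "\<forall>j\<le>k. x j \<le> x (Suc j)"
  defines "V \<equiv> tail_antideriv (x (Suc k)) p"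
  shows "cell_form k x w p q
       = poly q (x 0) * poly V (x 0) + (\<Sum>l\<le>Suc k. w l * poly (pderiv q * V) (x l))"
proof -
  have "cell_form k x w p q
      = (\<Sum>j\<le>k. (poly q (x 0) + (\<Sum>l\<le>j. w l * poly (pderiv q) (x l)))
               * (poly V (x j) - poly V (x (Suc j))))"
    unfolding cell_form_def V_def using assms(1)
    by (intro sum.cong refl) (simp add: integral_poly_tail_antideriv)
  also have "\<dots> = poly q (x 0) * poly V (x 0) + (\<Sum>l\<le>k. w l * poly (pderiv q) (x l) * poly V (x l))"
    using sum_prefix_sums_mult_diff
      [of "poly q (x 0)" "\<lambda>l. w l * poly (pderiv q) (x l)" "\<lambda>j. poly V (x j)" k]
    by (simp add: V_def)
  finally show ?thesis by (simp add: V_def mult.assoc)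
qed

(* Both orders have the shape of cell_form_tail_antideriv.  Their difference is the
   quadrature of X = H', which has degree 2k - 1, so it equals H b - H a: exactly
   the difference of the two boundary terms. *)
lemma cell_form_commute:
  assumes mono: "\<forall>j\<le>k. x j \<le> x (Suc j)" and cell: "x 0 \<le> x (Suc k)"
    and "k \<ge> 1" "degree p \<le> k" "degree q \<le> k"
    and exact: "\<forall>r. degree r \<le> 2 * k - 1 \<longrightarrow>
                  integral {x 0..x (Suc k)} (poly r) = (\<Sum>j\<le>Suc k. w j * poly r (x j))"
  shows "cell_form k x w p q = cell_form k x w q p"
proof -
  define a b where "a = x 0" and "b = x (Suc k)"
  define VP VQ where "VP = tail_antideriv b p" and "VQ = tail_antideriv b q"
  define X where "X = pderiv q * VP - pderiv p * VQ"
  define H where "H = q * VP - p * VQ"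
  have "pderiv H = X"
    unfolding H_def X_def VP_def VQ_def by (simp add: pderiv_mult pderiv_diff algebra_simps)
  have "(\<Sum>l\<le>Suc k. w l * poly X (x l)) = integral {a..b} (poly X)"
    using exact degree_tail_antideriv_commutator[OF assms(3-5)]
    unfolding a_def b_def X_def VP_def VQ_def by simp
  also have "\<dots> = poly H b - poly H a"
    using integral_poly_pderiv[OF cell[folded a_def b_def], of H] \<open>pderiv H = X\<close> by simp
  also have "\<dots> = poly p a * poly VQ a - poly q a * poly VP a"
    unfolding H_def VP_def VQ_def by simp
  finally have "(\<Sum>l\<le>Suc k. w l * poly X (x l)) = poly p a * poly VQ a - poly q a * poly VP a" .
  then show ?thesis
    unfolding cell_form_tail_antideriv[OF mono] a_def b_def VP_def VQ_def X_def
    by (simp add: algebra_simps sum_subtractf)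
qed

section \<open>Skew-adjointness of the stage operator up to jumps\<close>

lemma sum_lessThan_Suc_mod:
  fixes f :: "nat \<Rightarrow> 'a::comm_monoid_add"
  shows "(\<Sum>i<N. f (Suc i mod N)) = (\<Sum>i<N. f i)"
proof (cases N)
  case (Suc M)
  have "(\<Sum>i<Suc M. f (Suc i mod Suc M)) = (\<Sum>i<M. f (Suc i)) + f 0"
    by (simp add: sum.lessThan_Suc)
  also have "\<dots> = (\<Sum>i<Suc M. f i)"
    unfolding sum.lessThan_Suc_shift by (rule add.commute)
  finally show ?thesis using Suc by simp
qed simp

lemma ip_star_sum_left:
  assumes "finite S"
  shows "ip_star N k A xs xh (\<lambda>i. \<Sum>p\<in>S. smult (a p) (u p i)) w
       = (\<Sum>p\<in>S. a p * ip_star N k A xs xh (u p) w)"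
proof -
  have "integral {xs i j..xs i (Suc j)} (poly (\<Sum>p\<in>S. smult (a p) (u p i)))
      = (\<Sum>p\<in>S. a p * integral {xs i j..xs i (Suc j)} (poly (u p i)))" for i j
    unfolding poly_sum poly_smult
    by (subst integral_sum[OF assms])
       (auto intro!: integrable_continuous_interval continuous_intros)
  then show ?thesis
    unfolding ip_star_def
    by (simp add: sum_distrib_left sum_distrib_right algebra_simps sum.swap[of _ S])
qed

lemma jump_ip_commute: "jump_ip N xh v w = jump_ip N xh w v"
  by (simp add: jump_ip_def mult.commute)

lemma inV_funpow:
  assumes "\<forall>v. inV k N v \<longrightarrow> inV k N (D v)" "inV k N v"
  shows "inV k N ((D ^^ p) v)"
  using assms by (induction p) auto

locale quadrature_mesh =
  fixes N k :: nat and xh :: "nat \<Rightarrow> real" and xs A :: "nat \<Rightarrow> nat \<Rightarrow> real"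
  assumes cells: "\<forall>i<N. xh i < xh (Suc i)"
    and sub_left: "\<forall>i<N. xs i 0 = xh i"
    and sub_right: "\<forall>i<N. xs i (Suc k) = xh (Suc i)"
    and sub_mono: "\<forall>i<N. \<forall>j\<le>k. xs i j < xs i (Suc j)"
    and k_pos: "k \<ge> 1"
    and quad_exact: "\<forall>i<N. \<forall>p :: real poly. degree p \<le> 2 * k - 1 \<longrightarrow>
                        integral {xh i..xh (Suc i)} (\<lambda>x. poly p x) = quad k A xs i (\<lambda>x. poly p x)"
begin

lemma ip_star_eq_sum_cell_form:
  "ip_star N k A xs xh v w = (\<Sum>i<N. cell_form k (xs i) (A i) (v i) (w i))"
  unfolding ip_star_def mstar_def cell_form_def using sub_left by (intro sum.cong) auto

lemma ip_star_commute:
  assumes "inV k N v" "inV k N w"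
  shows "ip_star N k A xs xh v w = ip_star N k A xs xh w v"
  unfolding ip_star_eq_sum_cell_form
proof (rule sum.cong[OF refl])
  fix i assume "i \<in> {..<N}"
  then show "cell_form k (xs i) (A i) (v i) (w i) = cell_form k (xs i) (A i) (w i) (v i)"
    using assms cells sub_left sub_right sub_mono quad_exact k_pos
    by (intro cell_form_commute) (auto simp: inV_def quad_def less_imp_le)
qed

lemma ip_star_sum_sum:
  assumes "finite S" "\<forall>p\<in>S. inV k N (u p)"
  shows "ip_star N k A xs xh (\<lambda>i. \<Sum>p\<in>S. smult (a p) (u p i)) (\<lambda>i. \<Sum>p\<in>S. smult (a p) (u p i))
       = (\<Sum>p\<in>S. \<Sum>q\<in>S. a p * a q * ip_star N k A xs xh (u p) (u q))"
proof -
  let ?R = "\<lambda>i. \<Sum>p\<in>S. smult (a p) (u p i)"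
  have "inV k N ?R"
    using assms unfolding inV_def
    by (auto intro!: degree_sum_le order.trans[OF degree_smult_le])
  have "ip_star N k A xs xh ?R ?R = (\<Sum>p\<in>S. a p * ip_star N k A xs xh (u p) ?R)"
    using assms(1) by (rule ip_star_sum_left)
  also have "\<dots> = (\<Sum>p\<in>S. a p * ip_star N k A xs xh ?R (u p))"
    using assms(2) \<open>inV k N ?R\<close> by (intro sum.cong refl) (simp add: ip_star_commute)
  also have "\<dots> = (\<Sum>p\<in>S. \<Sum>q\<in>S. a p * a q * ip_star N k A xs xh (u q) (u p))"
    using assms(1) by (simp add: ip_star_sum_left sum_distrib_left mult.assoc)
  also have "\<dots> = (\<Sum>p\<in>S. \<Sum>q\<in>S. a p * a q * ip_star N k A xs xh (u p) (u q))"
    using assms(2) by (intro sum.cong refl) (simp add: ip_star_commute)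
  finally show ?thesis .
qed

lemma quad_pderiv_mult:
  assumes "i < N" "inV k N v" "inV k N w"
  shows "quad k A xs i (\<lambda>x. poly (v i) x * poly (pderiv (w i)) x)
           + quad k A xs i (\<lambda>x. poly (w i) x * poly (pderiv (v i)) x)
         = poly (v i * w i) (xh (Suc i)) - poly (v i * w i) (xh i)"
proof -
  have "degree (v i * w i) \<le> k + k"
    using assms unfolding inV_def by (intro order.trans[OF degree_mult_le] add_mono) auto
  then have "degree (pderiv (v i * w i)) \<le> 2 * k - 1" by (simp add: degree_pderiv)
  then have "quad k A xs i (poly (pderiv (v i * w i)))
      = integral {xh i..xh (Suc i)} (poly (pderiv (v i * w i)))"
    using quad_exact assms(1) by simp
  also have "\<dots> = poly (v i * w i) (xh (Suc i)) - poly (v i * w i) (xh i)"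
    using cells assms(1) by (intro integral_poly_pderiv) (simp add: less_imp_le)
  finally show ?thesis
    unfolding quad_def by (simp add: pderiv_mult sum.distrib[symmetric] algebra_simps)
qed

lemma Hstar_skew:
  assumes "inV k N v" "inV k N w"
  shows "Hstar N k A xs xh \<beta> v w + Hstar N k A xs xh \<beta> w v = - \<beta> * jump_ip N xh v w"
proof -
  let ?out = "\<lambda>i. poly (v i) (xh (Suc i))"
    and ?in = "\<lambda>i. poly (v (Suc i mod N)) (xh (Suc i mod N))"
  let ?wout = "\<lambda>i. poly (w i) (xh (Suc i))"
    and ?win = "\<lambda>i. poly (w (Suc i mod N)) (xh (Suc i mod N))"
  have "(\<Sum>i<N. quad k A xs i (\<lambda>x. poly (v i) x * poly (pderiv (w i)) x))
          + (\<Sum>i<N. quad k A xs i (\<lambda>x. poly (w i) x * poly (pderiv (v i)) x))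
        = (\<Sum>i<N. ?out i * ?wout i) - (\<Sum>i<N. poly (v i * w i) (xh i))"
    using assms by (simp add: sum.distrib[symmetric] sum_subtractf[symmetric] quad_pderiv_mult)
  also have "(\<Sum>i<N. poly (v i * w i) (xh i)) = (\<Sum>i<N. ?in i * ?win i)"
    using sum_lessThan_Suc_mod[of "\<lambda>i. poly (v i * w i) (xh i)" N] by simp
  finally have quads: "(\<Sum>i<N. quad k A xs i (\<lambda>x. poly (v i) x * poly (pderiv (w i)) x))
          + (\<Sum>i<N. quad k A xs i (\<lambda>x. poly (w i) x * poly (pderiv (v i)) x))
        = (\<Sum>i<N. ?out i * ?wout i) - (\<Sum>i<N. ?in i * ?win i)" .
  have "Hstar N k A xs xh \<beta> v w + Hstar N k A xs xh \<beta> w v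
      = \<beta> * ((\<Sum>i<N. quad k A xs i (\<lambda>x. poly (v i) x * poly (pderiv (w i)) x))
          + (\<Sum>i<N. quad k A xs i (\<lambda>x. poly (w i) x * poly (pderiv (v i)) x))
          + (\<Sum>i<N. ?out i * jump N xh w i) + (\<Sum>i<N. ?wout i * jump N xh v i))"
    unfolding Hstar_def by (simp add: algebra_simps)
  also have "\<dots> = \<beta> * (\<Sum>i<N. ?out i * ?wout i - ?in i * ?win i
                              + ?out i * jump N xh w i + ?wout i * jump N xh v i)"
    unfolding quads by (simp only: sum.distrib sum_subtractf)
  also have "\<dots> = \<beta> * (\<Sum>i<N. - (jump N xh v i * jump N xh w i))"
    by (intro arg_cong[where f = "\<lambda>x. \<beta> * x"] sum.cong refl) (simp add: jump_def algebra_simps)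
  also have "\<dots> = - \<beta> * jump_ip N xh v w"
    unfolding jump_ip_def by (simp add: sum_negf)
  finally show ?thesis .
qed

lemma operator_skew:
  assumes D_maps: "\<forall>v. inV k N v \<longrightarrow> inV k N (D v)"
    and D_def: "\<forall>v w. inV k N v \<longrightarrow> inV k N w \<longrightarrow>
                   ip_star N k A xs xh (D v) w = \<tau> * Hstar N k A xs xh \<beta> v w"
    and "inV k N v" "inV k N w"
  shows "ip_star N k A xs xh (D v) w + ip_star N k A xs xh v (D w)
       = - (\<tau> * \<beta>) * jump_ip N xh v w"
proof -
  have "ip_star N k A xs xh v (D w) = \<tau> * Hstar N k A xs xh \<beta> w v"
    using assms by (simp add: ip_star_commute)
  then have "ip_star N k A xs xh (D v) w + ip_star N k A xs xh v (D w)
      = \<tau> * (Hstar N k A xs xh \<beta> v w + Hstar N k A xs xh \<beta> w v)"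
    using assms by (simp add: distrib_left)
  then show ?thesis
    using Hstar_skew[OF assms(3,4)] by simp
qed

end

section \<open>Gram matrices of operators that are skew-adjoint up to jumps\<close>

definition skew_gram :: "real \<Rightarrow> (nat \<Rightarrow> nat \<Rightarrow> real) \<Rightarrow> (nat \<Rightarrow> nat \<Rightarrow> real) \<Rightarrow> bool" where
  "skew_gram \<tau> B g \<longleftrightarrow> (\<forall>a b. B a b = B b a) \<and> (\<forall>a b. B (Suc a) b + B a (Suc b) = - \<tau> * g a b)"

(* F B g is one fixed combination of the diagonal entries B \<kappa> \<kappa> (\<kappa> \<le> s, with
   coefficient e at \<kappa> = 0) and of the terms \<tau> g \<kappa> \<kappa>0 (\<kappa>, \<kappa>0 < s), valid for every
   pair B, g related by skew_gram.  Applied to the Gram matrix of the iterates D^p v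
   and their jump products, this makes the coefficients independent of v. *)
definition diag_reducible ::
    "real \<Rightarrow> nat \<Rightarrow> real \<Rightarrow> ((nat \<Rightarrow> nat \<Rightarrow> real) \<Rightarrow> (nat \<Rightarrow> nat \<Rightarrow> real) \<Rightarrow> real) \<Rightarrow> bool" where
  "diag_reducible \<tau> s e F \<longleftrightarrow> (\<exists>E G. E 0 = e \<and> (\<forall>B g. skew_gram \<tau> B g \<longrightarrow>
      F B g = (\<Sum>\<kappa>\<le>s. E \<kappa> * B \<kappa> \<kappa>) - \<tau> * (\<Sum>\<kappa><s. \<Sum>\<kappa>0<s. G \<kappa> \<kappa>0 * g \<kappa> \<kappa>0)))"

lemma diag_reducible_cong:
  assumes "diag_reducible \<tau> s e F" "e = e'" "\<And>B g. skew_gram \<tau> B g \<Longrightarrow> F B g = F' B g"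
  shows "diag_reducible \<tau> s e' F'"
  using assms unfolding diag_reducible_def by auto

lemma diag_reducible_zero: "diag_reducible \<tau> s 0 (\<lambda>B g. 0)"
  unfolding diag_reducible_def by (intro exI[of _ "\<lambda>_. 0"] exI[of _ "\<lambda>_ _. 0"]) simp

lemma diag_reducible_add:
  assumes "diag_reducible \<tau> s e1 F1" "diag_reducible \<tau> s e2 F2"
  shows "diag_reducible \<tau> s (e1 + e2) (\<lambda>B g. F1 B g + F2 B g)"
proof -
  obtain E1 G1 E2 G2 where "E1 0 = e1" "E2 0 = e2"
    and F1: "\<And>B g. skew_gram \<tau> B g \<Longrightarrow>
      F1 B g = (\<Sum>\<kappa>\<le>s. E1 \<kappa> * B \<kappa> \<kappa>) - \<tau> * (\<Sum>\<kappa><s. \<Sum>\<kappa>0<s. G1 \<kappa> \<kappa>0 * g \<kappa> \<kappa>0)"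
    and F2: "\<And>B g. skew_gram \<tau> B g \<Longrightarrow>
      F2 B g = (\<Sum>\<kappa>\<le>s. E2 \<kappa> * B \<kappa> \<kappa>) - \<tau> * (\<Sum>\<kappa><s. \<Sum>\<kappa>0<s. G2 \<kappa> \<kappa>0 * g \<kappa> \<kappa>0)"
    using assms unfolding diag_reducible_def by blast
  show ?thesis
    unfolding diag_reducible_def
  proof (intro exI[of _ "\<lambda>\<kappa>. E1 \<kappa> + E2 \<kappa>"] exI[of _ "\<lambda>\<kappa> \<kappa>0. G1 \<kappa> \<kappa>0 + G2 \<kappa> \<kappa>0"]
      conjI allI impI)
    fix B g assume "skew_gram \<tau> B g"
    then show "F1 B g + F2 B g = (\<Sum>\<kappa>\<le>s. (E1 \<kappa> + E2 \<kappa>) * B \<kappa> \<kappa>)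
        - \<tau> * (\<Sum>\<kappa><s. \<Sum>\<kappa>0<s. (G1 \<kappa> \<kappa>0 + G2 \<kappa> \<kappa>0) * g \<kappa> \<kappa>0)"
      by (simp add: F1 F2 distrib_right distrib_left sum.distrib)
  qed (simp add: \<open>E1 0 = e1\<close> \<open>E2 0 = e2\<close>)
qed

lemma diag_reducible_scale:
  assumes "diag_reducible \<tau> s e F"
  shows "diag_reducible \<tau> s (a * e) (\<lambda>B g. a * F B g)"
proof -
  obtain E G where "E 0 = e" and F: "\<And>B g. skew_gram \<tau> B g \<Longrightarrow>
      F B g = (\<Sum>\<kappa>\<le>s. E \<kappa> * B \<kappa> \<kappa>) - \<tau> * (\<Sum>\<kappa><s. \<Sum>\<kappa>0<s. G \<kappa> \<kappa>0 * g \<kappa> \<kappa>0)"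
    using assms unfolding diag_reducible_def by blast
  show ?thesis
    unfolding diag_reducible_def
  proof (intro exI[of _ "\<lambda>\<kappa>. a * E \<kappa>"] exI[of _ "\<lambda>\<kappa> \<kappa>0. a * G \<kappa> \<kappa>0"] conjI allI impI)
    fix B g assume "skew_gram \<tau> B g"
    then show "a * F B g = (\<Sum>\<kappa>\<le>s. a * E \<kappa> * B \<kappa> \<kappa>)
        - \<tau> * (\<Sum>\<kappa><s. \<Sum>\<kappa>0<s. a * G \<kappa> \<kappa>0 * g \<kappa> \<kappa>0)"
      by (simp add: F right_diff_distrib sum_distrib_left mult_ac)
  qed (simp add: \<open>E 0 = e\<close>)
qed

lemma diag_reducible_sum:
  assumes "finite P" "\<And>p. p \<in> P \<Longrightarrow> diag_reducible \<tau> s (e p) (F p)"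
  shows "diag_reducible \<tau> s (\<Sum>p\<in>P. e p) (\<lambda>B g. \<Sum>p\<in>P. F p B g)"
  using assms
  by (induction P rule: finite_induct) (simp_all add: diag_reducible_zero diag_reducible_add)

lemma diag_reducible_diag_entry:
  assumes "\<kappa> \<le> s"
  shows "diag_reducible \<tau> s (of_bool (\<kappa> = 0)) (\<lambda>B g. B \<kappa> \<kappa>)"
  unfolding diag_reducible_def using assms
  by (intro exI[of _ "\<lambda>j. of_bool (j = \<kappa>)"] exI[of _ "\<lambda>_ _. 0"]) simp

lemma diag_reducible_jump:
  assumes "\<kappa> < s" "\<kappa>0 < s"
  shows "diag_reducible \<tau> s 0 (\<lambda>B g. - \<tau> * g \<kappa> \<kappa>0)"
  unfolding diag_reducible_def using assms
  by (intro exI[of _ "\<lambda>_. 0"] exI[of _ "\<lambda>a b. of_bool (a = \<kappa> \<and> b = \<kappa>0)"])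
     (simp add: of_bool_conj mult.assoc flip: sum_distrib_left)

(* One step moves a power of D across: B p (q+1) = - B (p+1) q - \<tau> g p q.  At distance
   one, symmetry gives B p (p+1) = - \<tau> g p p / 2. *)
lemma diag_reducible_upper_entry:
  assumes "p + d \<le> s"
  shows "diag_reducible \<tau> s (of_bool (p = 0 \<and> d = 0)) (\<lambda>B g. B p (p + d))"
  using assms
proof (induction d arbitrary: p rule: less_induct)
  case (less d)
  consider "d = 0" | "d = 1" | d' where "d = Suc (Suc d')"
    by (metis One_nat_def not0_implies_Suc)
  then show ?case
  proof cases
    case 1
    then show ?thesis using less.prems diag_reducible_diag_entry[of p s \<tau>] by simp
  next
    case 2
    have "diag_reducible \<tau> s (1 / 2 * 0) (\<lambda>B g. 1 / 2 * (- \<tau> * g p p))"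
      using less.prems 2 by (intro diag_reducible_scale diag_reducible_jump) auto
    then show ?thesis
    proof (rule diag_reducible_cong)
      fix B g assume "skew_gram \<tau> B g"
      then have "B (Suc p) p = B p (Suc p)" "B (Suc p) p + B p (Suc p) = - \<tau> * g p p"
        unfolding skew_gram_def by blast+
      then show "1 / 2 * (- \<tau> * g p p) = B p (p + d)" using 2 by simp
    qed (use 2 in simp)
  next
    case 3
    have "diag_reducible \<tau> s (- 1 * 0 + 0)
            (\<lambda>B g. - 1 * B (Suc p) (Suc p + d') + - \<tau> * g p (Suc (p + d')))"
      using less.prems 3 less.IH[of d' "Suc p"]
      by (intro diag_reducible_add diag_reducible_scale diag_reducible_jump) auto
    then show ?thesis
    proof (rule diag_reducible_cong)
      fix B g assume "skew_gram \<tau> B g"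
      then have "B (Suc p) (Suc (p + d')) + B p (Suc (Suc (p + d'))) = - \<tau> * g p (Suc (p + d'))"
        unfolding skew_gram_def by blast
      then show "- 1 * B (Suc p) (Suc p + d') + - \<tau> * g p (Suc (p + d')) = B p (p + d)"
        using 3 by simp
    qed (use 3 in simp)
  qed
qed

lemma diag_reducible_entry:
  assumes "p \<le> s" "q \<le> s"
  shows "diag_reducible \<tau> s (of_bool (p = 0 \<and> q = 0)) (\<lambda>B g. B p q)"
proof (cases "p \<le> q")
  case True
  then show ?thesis
    using diag_reducible_upper_entry[of p "q - p" s \<tau>] assms by (cases "p = 0") simp_all
next
  case False
  then have "diag_reducible \<tau> s 0 (\<lambda>B g. B q p)"
    using diag_reducible_upper_entry[of q "p - q"] assms by simp
  then show ?thesis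
    by (rule diag_reducible_cong) (use False in \<open>auto simp: skew_gram_def\<close>)
qed

lemma diag_reducible_quadratic_form:
  assumes "\<alpha> 0 = 1"
  shows "diag_reducible \<tau> s 1 (\<lambda>B g. \<Sum>p\<le>s. \<Sum>q\<le>s. \<alpha> p * \<alpha> q * B p q)"
proof -
  have "diag_reducible \<tau> s (\<Sum>p\<le>s. \<Sum>q\<le>s. \<alpha> p * \<alpha> q * of_bool (p = 0 \<and> q = 0))
          (\<lambda>B g. \<Sum>p\<le>s. \<Sum>q\<le>s. \<alpha> p * \<alpha> q * B p q)"
    by (intro diag_reducible_sum diag_reducible_scale diag_reducible_entry) auto
  moreover have "(\<Sum>p\<le>s. \<Sum>q\<le>s. \<alpha> p * \<alpha> q * of_bool (p = 0 \<and> q = 0))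
      = (\<Sum>p\<le>s. \<alpha> p * of_bool (p = 0)) * (\<Sum>q\<le>s. \<alpha> q * of_bool (q = 0))"
    unfolding sum_product by (intro sum.cong refl) auto
  ultimately show ?thesis
    using assms by (auto elim: diag_reducible_cong)
qed

lemma sum_sum_symmetrize:
  fixes G g :: "'a \<Rightarrow> 'a \<Rightarrow> 'b::field_char_0"
  assumes "\<forall>a b. g a b = g b a"
  shows "(\<Sum>a\<in>K. \<Sum>b\<in>K. G a b * g a b) = (\<Sum>a\<in>K. \<Sum>b\<in>K. (G a b + G b a) / 2 * g a b)"
proof -
  have "(\<Sum>a\<in>K. \<Sum>b\<in>K. G b a * g a b) = (\<Sum>a\<in>K. \<Sum>b\<in>K. G a b * g a b)"
    using assms by (subst sum.swap) simp
  moreover have "(\<Sum>a\<in>K. \<Sum>b\<in>K. (G a b + G b a) / 2 * g a b)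
      = ((\<Sum>a\<in>K. \<Sum>b\<in>K. G a b * g a b) + (\<Sum>a\<in>K. \<Sum>b\<in>K. G b a * g a b)) / 2"
    by (simp add: sum_divide_distrib sum.distrib[symmetric] field_simps)
  ultimately show ?thesis by simp
qed

lemma skew_gram_quadratic_form_identity:
  assumes "\<alpha> 0 = 1"
  obtains b bb where "\<And>B g. skew_gram \<tau> B g \<Longrightarrow> \<forall>a b. g a b = g b a \<Longrightarrow>
           (\<Sum>p\<le>s. \<Sum>q\<le>s. \<alpha> p * \<alpha> q * B p q)
             = B 0 0 + (\<Sum>\<kappa>=1..s. b \<kappa> * B \<kappa> \<kappa>)
               - \<tau> * (\<Sum>\<kappa><s. \<Sum>\<kappa>0<s. bb \<kappa> \<kappa>0 * g \<kappa> \<kappa>0)"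
    and "\<forall>\<kappa> \<kappa>0. bb \<kappa> \<kappa>0 = bb \<kappa>0 \<kappa>"
proof -
  obtain E G where "E 0 = 1" and EG: "\<forall>B g. skew_gram \<tau> B g \<longrightarrow>
      (\<Sum>p\<le>s. \<Sum>q\<le>s. \<alpha> p * \<alpha> q * B p q)
        = (\<Sum>\<kappa>\<le>s. E \<kappa> * B \<kappa> \<kappa>) - \<tau> * (\<Sum>\<kappa><s. \<Sum>\<kappa>0<s. G \<kappa> \<kappa>0 * g \<kappa> \<kappa>0)"
    using diag_reducible_quadratic_form[where \<alpha> = \<alpha>, OF assms]
    unfolding diag_reducible_def by blast
  have split_0: "(\<Sum>\<kappa>\<le>s. E \<kappa> * X \<kappa>) = X 0 + (\<Sum>\<kappa>=1..s. E \<kappa> * X \<kappa>)"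
    for X :: "nat \<Rightarrow> real"
    using \<open>E 0 = 1\<close> by (simp add: atMost_atLeast0 sum.atLeast_Suc_atMost)
  show ?thesis
  proof (rule that[of E "\<lambda>\<kappa> \<kappa>0. (G \<kappa> \<kappa>0 + G \<kappa>0 \<kappa>) / 2"])
    fix B g assume "skew_gram \<tau> B g" "\<forall>a b. g a b = g b a"
    then show "(\<Sum>p\<le>s. \<Sum>q\<le>s. \<alpha> p * \<alpha> q * B p q)
        = B 0 0 + (\<Sum>\<kappa>=1..s. E \<kappa> * B \<kappa> \<kappa>)
          - \<tau> * (\<Sum>\<kappa><s. \<Sum>\<kappa>0<s. (G \<kappa> \<kappa>0 + G \<kappa>0 \<kappa>) / 2 * g \<kappa> \<kappa>0)"
      using EG split_0[of "\<lambda>\<kappa>. B \<kappa> \<kappa>"] sum_sum_symmetrize[of g G "{..<s}"] by simp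
  qed (simp add: add.commute)
qed

lemma (in quadrature_mesh) skew_gram_iterates:
  assumes D_maps: "\<forall>v. inV k N v \<longrightarrow> inV k N (D v)"
    and D_def: "\<forall>v w. inV k N v \<longrightarrow> inV k N w \<longrightarrow>
                   ip_star N k A xs xh (D v) w = \<tau> * Hstar N k A xs xh \<beta> v w"
    and "inV k N v"
  shows "skew_gram (\<tau> * \<beta>) (\<lambda>p q. ip_star N k A xs xh ((D ^^ p) v) ((D ^^ q) v))
           (\<lambda>p q. jump_ip N xh ((D ^^ p) v) ((D ^^ q) v))"
  using inV_funpow[OF D_maps \<open>inV k N v\<close>] operator_skew[OF D_maps D_def]
  unfolding skew_gram_def by (simp add: ip_star_commute)

section \<open>Runge--Kutta stability polynomials\<close>

lemma length_rk_polys: "length (rk_polys c d n) = Suc n"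
  by (induction n) auto

lemma nth_rk_polys: "m \<le> n \<Longrightarrow> rk_polys c d n ! m = rk_poly c d m"
proof (induction n)
  case 0
  then show ?case by (simp add: rk_poly_def)
next
  case (Suc n)
  then show ?case
    by (cases "m = Suc n") (simp_all add: rk_poly_def nth_append length_rk_polys)
qed

lemma rk_poly_Suc: "rk_poly c d (Suc l) = (\<Sum>\<kappa>\<le>l. [:c l \<kappa>, d l \<kappa>:] * rk_poly c d \<kappa>)"
  by (simp add: rk_poly_def[of c d "Suc l"] nth_append length_rk_polys nth_rk_polys)

lemma poly_rk_poly_0:
  assumes "\<forall>l<s. (\<Sum>\<kappa>\<le>l. c l \<kappa>) = 1" "n \<le> s"
  shows "poly (rk_poly c d n) 0 = 1"
  using assms(2)
proof (induction n rule: less_induct)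
  case (less n)
  show ?case
  proof (cases n)
    case 0
    then show ?thesis by (simp add: rk_poly_def)
  next
    case (Suc l)
    then have "poly (rk_poly c d n) 0 = (\<Sum>\<kappa>\<le>l. c l \<kappa>)"
      using less by (simp add: rk_poly_Suc poly_sum)
    then show ?thesis using assms(1) less.prems Suc by simp
  qed
qed

theorem proposition4p9:
  fixes N k s :: nat
    and xh :: "nat \<Rightarrow> real" and xs A :: "nat \<Rightarrow> nat \<Rightarrow> real"
    and c d :: "nat \<Rightarrow> nat \<Rightarrow> real" and \<tau> \<beta> :: real
    and D :: "(nat \<Rightarrow> real poly) \<Rightarrow> (nat \<Rightarrow> real poly)"
  assumes N_pos: "N \<ge> 1"
    and cells: "\<forall>i<N. xh i < xh (Suc i)"
    and sub_left: "\<forall>i<N. xs i 0 = xh i"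
    and sub_right: "\<forall>i<N. xs i (Suc k) = xh (Suc i)"
    and sub_mono: "\<forall>i<N. \<forall>j\<le>k. xs i j < xs i (Suc j)"
    \<comment> \<open>Assumption (S)\<close>
    and k_pos: "k \<ge> 1"
    and quad_exact: "\<forall>i<N. \<forall>p :: real poly. degree p \<le> 2 * k - 1 \<longrightarrow>
                        integral {xh i..xh (Suc i)} (\<lambda>x. poly p x) = quad k A xs i (\<lambda>x. poly p x)"
    and S_pos: "\<forall>i<N. (xh (Suc i) - xh i) / (2 * real k - 1)
                   - quad k A xs i (\<lambda>x. shifted_legendre (xh i) (xh (Suc i)) (Suc k) x
                                       * shifted_legendre (xh i) (xh (Suc i)) (k - 1) x) > 0"
    \<comment> \<open>upwind condition\<close>
    and upwind: "\<forall>i<N. A i 0 = 0"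
    and beta_pos: "\<beta> > 0" and tau_pos: "\<tau> > 0"
    \<comment> \<open>explicit s-stage Runge--Kutta method\<close>
    and s_pos: "s \<ge> 1"
    and c_sum: "\<forall>l<s. (\<Sum>\<kappa>\<le>l. c l \<kappa>) = 1"
    \<comment> \<open>the operator D^*\<close>
    and D_maps: "\<forall>v. inV k N v \<longrightarrow> inV k N (D v)"
    and D_def: "\<forall>v w. inV k N v \<longrightarrow> inV k N w \<longrightarrow>
                   ip_star N k A xs xh (D v) w = \<tau> * Hstar N k A xs xh \<beta> v w"
  shows "\<exists>b :: nat \<Rightarrow> real. \<exists>bb :: nat \<Rightarrow> nat \<Rightarrow> real.
           (\<forall>\<kappa><s. \<forall>\<kappa>0<s. bb \<kappa> \<kappa>0 = bb \<kappa>0 \<kappa>) \<and>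
           (\<forall>v. inV k N v \<longrightarrow>
              (let R = (\<lambda>i. \<Sum>\<kappa>\<le>s. smult (coeff (rk_poly c d s) \<kappa>) ((D ^^ \<kappa>) v i))
               in ip_star N k A xs xh R R
                  = ip_star N k A xs xh v v
                    + (\<Sum>\<kappa>=1..s. b \<kappa> * ip_star N k A xs xh ((D ^^ \<kappa>) v) ((D ^^ \<kappa>) v))
                    - \<tau> * (\<Sum>\<kappa><s. \<Sum>\<kappa>0<s. bb \<kappa> \<kappa>0 * jump_ip N xh ((D ^^ \<kappa>) v) ((D ^^ \<kappa>0) v))))"
proof -
  interpret quadrature_mesh N k xh xs A
    using cells sub_left sub_right sub_mono k_pos quad_exact by unfold_locales
  define \<alpha> where "\<alpha> = coeff (rk_poly c d s)"
  have "\<alpha> 0 = 1"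
    unfolding \<alpha>_def using poly_rk_poly_0[OF c_sum order.refl] by (simp add: poly_0_coeff_0)
  then obtain b bb
    where identity: "\<And>B g. skew_gram (\<tau> * \<beta>) B g \<Longrightarrow> \<forall>a b. g a b = g b a \<Longrightarrow>
           (\<Sum>p\<le>s. \<Sum>q\<le>s. \<alpha> p * \<alpha> q * B p q)
             = B 0 0 + (\<Sum>\<kappa>=1..s. b \<kappa> * B \<kappa> \<kappa>)
               - \<tau> * \<beta> * (\<Sum>\<kappa><s. \<Sum>\<kappa>0<s. bb \<kappa> \<kappa>0 * g \<kappa> \<kappa>0)"
    and bb_sym: "\<forall>\<kappa> \<kappa>0. bb \<kappa> \<kappa>0 = bb \<kappa>0 \<kappa>"
    using skew_gram_quadratic_form_identity[where \<tau> = "\<tau> * \<beta>" and s = s] by blast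
  show ?thesis
  proof (intro exI[of _ b] exI[of _ "\<lambda>\<kappa> \<kappa>0. \<beta> * bb \<kappa> \<kappa>0"] conjI allI impI)
    fix v assume v: "inV k N v"
    show "let R = (\<lambda>i. \<Sum>\<kappa>\<le>s. smult (coeff (rk_poly c d s) \<kappa>) ((D ^^ \<kappa>) v i))
          in ip_star N k A xs xh R R
             = ip_star N k A xs xh v v
               + (\<Sum>\<kappa>=1..s. b \<kappa> * ip_star N k A xs xh ((D ^^ \<kappa>) v) ((D ^^ \<kappa>) v))
               - \<tau> * (\<Sum>\<kappa><s. \<Sum>\<kappa>0<s. \<beta> * bb \<kappa> \<kappa>0 * jump_ip N xh ((D ^^ \<kappa>) v) ((D ^^ \<kappa>0) v))"
      using identity[OF skew_gram_iterates[OF D_maps D_def v]]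
        ip_star_sum_sum[of "{..s}" "\<lambda>p. (D ^^ p) v" \<alpha>] inV_funpow[OF D_maps v]
      by (simp add: Let_def \<alpha>_def jump_ip_commute sum_distrib_left mult.assoc)
  qed (use bb_sym in simp)
qed

end
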